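(* (a) Fix $i\in\{1,\dots,m_x\}$ and suppose $(\underline b,\bar b,\underline S_{[i]},\bar S_{[i]})$ with $\underline S_{[i]}\in\mathbb{D}_+^{\underline m}$, $\bar S_{[i]}\in\mathbb{D}_+^{\bar m}$ satisfies condition (X$_i$). Consider the LMI in $(\underline{\mathbf b},\bar{\mathbf b},\hat{\underline{\mathbf S}}_{[i]},\hat{\bar{\mathbf S}}_{[i]})$: $$\begin{bmatrix} \hat{\underline{\mathbf S}}_{[i]} & \mathbf 0 & \underline{\mathbf b} & \mathbf 0 & \mathbf 0\\ * & \hat{\bar{\mathbf S}}_{[i]} & \bar{\mathbf b} & \mathbf 0 & \mathbf 0\\ * & * & 2v^x_i & V^x_i & V^x_i\\ * & * & * & \mathcal{L}^{\underline P,\underline S_{[i]}^{-1}}_{\underline P,\hat{\underline{\mathbf S}}_{[i]}} & \mathbf 0\\ * & * & * & * & \mathcal{L}^{\bar P,\bar S_{[i]}^{-1}}_{\bar P,\hat{\bar{\mathbf S}}_{[i]}} \end{bmatrix}\succ0.$$ Then it is satisfied by $(\underline b,\bar b,\underline S_{[i]}^{-1},\bar S_{[i]}^{-1})$, and any solution with $\hat{\underline{\mathbf S}}_{[i]}\in\mathbb{D}_+^{\underline m}$, $\hat{\bar{\mathbf S}}_{[i]}\in\mathbb{D}_+^{\bar m}$ gives $(\underline{\mathbf b},\bar{\mathbf b},\hat{\underline{\mathbf S}}_{[i]}^{-1},\hat{\bar{\mathbf S}}_{[i]}^{-1})$ satisfying (X$_i$). (b) Fix $i\in\{1,\dots,m_u\}$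 and suppose $(K,\underline b,\bar b,\underline R_{[i]},\bar R_{[i]})$ with $\underline R_{[i]}\in\mathbb{D}_+^{\underline m}$, $\bar R_{[i]}\in\mathbb{D}_+^{\bar m}$ satisfies condition (U$_i$). Consider the LMI in $(\mathbf K,\underline{\mathbf b},\bar{\mathbf b},\hat{\underline{\mathbf R}}_{[i]},\hat{\bar{\mathbf R}}_{[i]})$: $$\begin{bmatrix} \hat{\underline{\mathbf R}}_{[i]} & \mathbf 0 & \underline{\mathbf b} & \mathbf 0 & \mathbf 0\\ * & \hat{\bar{\mathbf R}}_{[i]} & \bar{\mathbf b} & \mathbf 0 & \mathbf 0\\ * & * & 2v^u_i & V^u_i\mathbf K & V^u_i\mathbf K\\ * & * & * & \mathcal{L}^{\underline P,\underline R_{[i]}^{-1}}_{\underline P,\hat{\underline{\mathbf R}}_{[i]}} & \mathbf 0\\ * & * & * & * & \mathcal{L}^{\bar P,\bar R_{[i]}^{-1}}_{\bar P,\hat{\bar{\mathbf R}}_{[i]}} \end{bmatrix}\succ0.$$ Then it is satisfied by $(K,\underline b,\bar b,\underline R_{[i]}^{-1},\bar R_{[i]}^{-1})$, and any solution with $\hat{\underline{\mathbf R}}_{[i]}\in\mathbb{D}_+^{\underline m}$, $\hat{\bar{\mathbf R}}_{[i]}\in\mathbb{D}_+^{\bar m}$ gives $(\mathbf K,\underline{\mathbf b},\bar{\mathbf b},\hat{\underline{\mathbf R}}_{[i]}^{-1},\hat{\bar{\mathbf R}}_{[i]}^{-1})$ satisfying (U$_i$).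
   Context: Notation: $M_i$ is the $i$-th row of $M$, $b_i$ the $i$-th entry of $b$; $\mathbb{D}_+^m$ is the set of $m\times m$ diagonal matrices with positive diagonal; $\succ0$ means symmetric positive definite; $*$ denotes symmetric blocks. For $\mathbf L,L\in\mathbb{R}^{m\times n}$ and symmetric invertible $\mathbf D,D\in\mathbb{R}^{m\times m}$, $\mathcal{L}^{L,D}_{\mathbf L,\mathbf D}:=\mathbf L^\top D^{-1}L+L^\top D^{-1}\mathbf L-L^\top D^{-1}\mathbf DD^{-1}L$. Fixed data: $\underline P\in\mathbb{R}^{\underline m\times n_x}$, $\bar P\in\mathbb{R}^{\bar m\times n_x}$, $V^x\in\mathbb{R}^{m_x\times n_x}$, $v^x\in\mathbb{R}^{m_x}$, $V^u\in\mathbb{R}^{m_u\times n_u}$, $v^u\in\mathbb{R}^{m_u}$. Variables $\underline b\in\mathbb{R}^{\underline m}$, $\bar b\in\mathbb{R}^{\bar m}$, $K\in\mathbb{R}^{n_u\times n_x}$. Condition (X$_i$): $$\begin{bmatrix}2v^x_i-\underline b^\top\underline S_{[i]}\underline b-\bar b^\top\bar S_{[i]}\bar b & V^x_i & V^x_i\\ * & \underline P^\top\underline S_{[i]}\underline P & \mathbf 0\\ * & * & \bar P^\top\bar S_{[i]}\bar P\end{bmatrix}\succ0.$$ Condition (U$_i$): $$\begin{bmatrix}2v^u_i-\underline b^\top\underline R_{[i]}\underline b-\bar b^\top\bar R_{[i]}\bar b & V^u_iK & V^u_iK\\ * & \underline P^\top\underline R_{[i]}\underline P & \mathbf 0\\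 * & * & \bar P^\top\bar R_{[i]}\bar P\end{bmatrix}\succ0.$$ *)

theory Defs
  imports "Jordan_Normal_Form.Gauss_Jordan_Elimination"
begin

definition posdef :: "real mat \<Rightarrow> bool" where
  "posdef M \<longleftrightarrow> M \<in> carrier_mat (dim_row M) (dim_row M) \<and> transpose_mat M = M \<and>
     (\<forall>x \<in> carrier_vec (dim_row M). x \<noteq> 0\<^sub>v (dim_row M) \<longrightarrow> x \<bullet> (M *\<^sub>v x) > 0)"

definition Dplus :: "nat \<Rightarrow> real mat \<Rightarrow> bool" where
  "Dplus m D \<longleftrightarrow> D \<in> carrier_mat m m \<and> diagonal_mat D \<and> (\<forall>i<m. D $$ (i,i) > 0)"

(* matrix inverse (meaningful for invertible square matrices) *)
definition minv :: "real mat \<Rightarrow> real mat" where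
  "minv A = the (mat_inverse A)"

(* \<L>^{L,D}_{Lb,Db} = Lb^T D^-1 L + L^T D^-1 Lb - L^T D^-1 Db D^-1 L *)
definition Lcal :: "real mat \<Rightarrow> real mat \<Rightarrow> real mat \<Rightarrow> real mat \<Rightarrow> real mat" where
  "Lcal Lb Db L D = transpose_mat Lb * minv D * L + transpose_mat L * minv D * Lb
                    - transpose_mat L * minv D * Db * minv D * L"

definition hcat :: "real mat \<Rightarrow> real mat \<Rightarrow> real mat" where
  "hcat A B = four_block_mat A B (0\<^sub>m 0 (dim_col A)) (0\<^sub>m 0 (dim_col B))"

definition vcat :: "real mat \<Rightarrow> real mat \<Rightarrow> real mat" where
  "vcat A B = four_block_mat A (0\<^sub>m (dim_row A) 0) B (0\<^sub>m (dim_row B) 0)"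

(* Generic 3x3 block condition; r is a 1 x n row, c a scalar.
   (X_i): c = v^x_i, r = V^x_i;  (U_i): c = v^u_i, r = V^u_i K *)
definition cond3 :: "real \<Rightarrow> real mat \<Rightarrow> real mat \<Rightarrow> real mat \<Rightarrow>
    real vec \<Rightarrow> real vec \<Rightarrow> real mat \<Rightarrow> real mat \<Rightarrow> bool" where
  "cond3 c r Pl Pb bl bb Sl Sb =
    (let n = dim_col Pl;
         s = mat 1 1 (\<lambda>_. 2 * c - bl \<bullet> (Sl *\<^sub>v bl) - bb \<bullet> (Sb *\<^sub>v bb))
     in posdef
       (vcat (hcat s (hcat r r))
        (vcat (hcat (transpose_mat r) (hcat (transpose_mat Pl * Sl * Pl) (0\<^sub>m n n)))
              (hcat (transpose_mat r) (hcat (0\<^sub>m n n) (transpose_mat Pb * Sb * Pb))))))"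

definition condX :: "real mat \<Rightarrow> real mat \<Rightarrow> real mat \<Rightarrow> real vec \<Rightarrow> nat \<Rightarrow>
    real vec \<Rightarrow> real vec \<Rightarrow> real mat \<Rightarrow> real mat \<Rightarrow> bool" where
  "condX Pl Pb Vx vx i bl bb Sl Sb =
     cond3 (vx $ i) (mat_of_rows (dim_col Vx) [row Vx i]) Pl Pb bl bb Sl Sb"

definition condU :: "real mat \<Rightarrow> real mat \<Rightarrow> real mat \<Rightarrow> real vec \<Rightarrow> nat \<Rightarrow>
    real mat \<Rightarrow> real vec \<Rightarrow> real vec \<Rightarrow> real mat \<Rightarrow> real mat \<Rightarrow> bool" where
  "condU Pl Pb Vu vu i K bl bb Rl Rb =
     cond3 (vu $ i) (mat_of_rows (dim_col Vu) [row Vu i] * K) Pl Pb bl bb Rl Rb"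

(* Generic 5x5 block LMI in (bl, bb, Sh, Sbh); Sl, Sb are the fixed matrices from
   the given feasible point entering via \<L>^{P,S^-1}_{P,Sh}. *)
definition lmi5 :: "real \<Rightarrow> real mat \<Rightarrow> real mat \<Rightarrow> real mat \<Rightarrow> real mat \<Rightarrow> real mat \<Rightarrow>
    real vec \<Rightarrow> real vec \<Rightarrow> real mat \<Rightarrow> real mat \<Rightarrow> bool" where
  "lmi5 c r Pl Pb Sl Sb bl bb Sh Sbh =
    (let n = dim_col Pl; ml = dim_row Pl; mb = dim_row Pb
     in posdef
      (vcat (hcat Sh (hcat (0\<^sub>m ml mb) (hcat (mat_of_cols ml [bl]) (hcat (0\<^sub>m ml n) (0\<^sub>m ml n)))))
      (vcat (hcat (0\<^sub>m mb ml) (hcat Sbh (hcat (mat_of_cols mb [bb]) (hcat (0\<^sub>m mb n) (0\<^sub>m mb n)))))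
      (vcat (hcat (mat_of_rows ml [bl]) (hcat (mat_of_rows mb [bb]) (hcat (mat 1 1 (\<lambda>_. 2 * c)) (hcat r r))))
      (vcat (hcat (0\<^sub>m n ml) (hcat (0\<^sub>m n mb) (hcat (transpose_mat r)
                 (hcat (Lcal Pl Sh Pl (minv Sl)) (0\<^sub>m n n)))))
            (hcat (0\<^sub>m n ml) (hcat (0\<^sub>m n mb) (hcat (transpose_mat r)
                 (hcat (0\<^sub>m n n) (Lcal Pb Sbh Pb (minv Sb)))))))))))"

definition lmiX :: "real mat \<Rightarrow> real mat \<Rightarrow> real mat \<Rightarrow> real vec \<Rightarrow> nat \<Rightarrow> real mat \<Rightarrow> real mat \<Rightarrow>
    real vec \<Rightarrow> real vec \<Rightarrow> real mat \<Rightarrow> real mat \<Rightarrow> bool" where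
  "lmiX Pl Pb Vx vx i Sl Sb bl bb Sh Sbh =
     lmi5 (vx $ i) (mat_of_rows (dim_col Vx) [row Vx i]) Pl Pb Sl Sb bl bb Sh Sbh"

definition lmiU :: "real mat \<Rightarrow> real mat \<Rightarrow> real mat \<Rightarrow> real vec \<Rightarrow> nat \<Rightarrow> real mat \<Rightarrow> real mat \<Rightarrow>
    real mat \<Rightarrow> real vec \<Rightarrow> real vec \<Rightarrow> real mat \<Rightarrow> real mat \<Rightarrow> bool" where
  "lmiU Pl Pb Vu vu i Rl Rb K bl bb Rh Rbh =
     lmi5 (vu $ i) (mat_of_rows (dim_col Vu) [row Vu i] * K) Pl Pb Rl Rb bl bb Rh Rbh"

end

theory Submission
  imports Defs
begin

(* All scalings are positive diagonal, so both block conditions are positivity statements for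
   explicit quadratic forms.  For S = diag s and \<hat>S = diag h the \<L>-block gives row k of P the
   weight 2 s_k - s_k^2 h_k, which is at most 1 / h_k since the difference is (1 - s_k h_k)^2 / h_k,
   with equality for h = 1 / s.  Completing the square in the first two block variables turns the
   5x5 form into the 3x3 form with scalings \<hat>S^-1, minus these nonnegative gaps: evaluating at
   the minimiser gives (X_i) resp. (U_i) from the LMI, and for \<hat>S = S^-1 the 5x5 form is the
   3x3 form plus two weighted sums of squares. *)

lemma dim_hcat [simp]:
  "dim_row (hcat A B) = dim_row A" "dim_col (hcat A B) = dim_col A + dim_col B"
  unfolding hcat_def by simp_all

lemma dim_vcat [simp]:
  "dim_row (vcat A B) = dim_row A + dim_row B" "dim_col (vcat A B) = dim_col A"
  unfolding vcat_def by simp_all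

lemma transpose_hcat:
  "dim_row B = dim_row A \<Longrightarrow> transpose_mat (hcat A B) = vcat (transpose_mat A) (transpose_mat B)"
  unfolding hcat_def vcat_def
  by (subst transpose_four_block_mat[of _ "dim_row A" "dim_col A" _ "dim_col B" _ 0]) auto

lemma transpose_vcat:
  "dim_col B = dim_col A \<Longrightarrow> transpose_mat (vcat A B) = hcat (transpose_mat A) (transpose_mat B)"
  unfolding hcat_def vcat_def
  by (subst transpose_four_block_mat[of _ "dim_row A" "dim_col A" _ 0 _ "dim_row B"]) auto

lemma hcat_vcat_interchange:
  "dim_row B = dim_row A \<Longrightarrow> dim_row D = dim_row C \<Longrightarrow>
   dim_col C = dim_col A \<Longrightarrow> dim_col D = dim_col B \<Longrightarrow>
   hcat (vcat A C) (vcat B D) = vcat (hcat A B) (hcat C D)"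
  unfolding hcat_def vcat_def by (rule eq_matI) (auto simp: index_mat_four_block)

lemma mult_mat_vec_vcat:
  "dim_col B = dim_col A \<Longrightarrow> dim_vec x = dim_col A \<Longrightarrow>
   vcat A B *\<^sub>v x = (A *\<^sub>v x) @\<^sub>v (B *\<^sub>v x)"
  unfolding vcat_def by (rule eq_vecI) (auto simp: index_mat_four_block scalar_prod_def row_def)

lemma row_hcat:
  "dim_row B = dim_row A \<Longrightarrow> i < dim_row A \<Longrightarrow> row (hcat A B) i = row A i @\<^sub>v row B i"
  unfolding hcat_def by (rule eq_vecI) (auto simp: index_mat_four_block)

lemma mult_mat_vec_hcat:
  assumes "dim_row B = dim_row A" "dim_vec x = dim_col A" "dim_vec y = dim_col B"
  shows "hcat A B *\<^sub>v (x @\<^sub>v y) = A *\<^sub>v x + B *\<^sub>v y"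
proof (rule eq_vecI)
  fix i assume "i < dim_vec (A *\<^sub>v x + B *\<^sub>v y)"
  then have i: "i < dim_row A" using assms by simp
  have rows: "row A i \<in> carrier_vec (dim_col A)" "row B i \<in> carrier_vec (dim_col B)"
    and xy: "x \<in> carrier_vec (dim_col A)" "y \<in> carrier_vec (dim_col B)"
    using assms by (auto intro: carrier_vecI)
  with assms i show "(hcat A B *\<^sub>v (x @\<^sub>v y)) $ i = (A *\<^sub>v x + B *\<^sub>v y) $ i"
    by (simp add: row_hcat scalar_prod_append[OF rows xy])
qed (use assms in simp)

lemma transpose_mat_const [simp]: "transpose_mat (mat n n (\<lambda>_. a)) = mat n n (\<lambda>_. a)"
  by (rule eq_matI) auto

lemma ball_carrier_vec_add:
  "(\<forall>x\<in>carrier_vec (a + b). P x) \<longleftrightarrow> (\<forall>y\<in>carrier_vec a. \<forall>z\<in>carrier_vec b. P (y @\<^sub>v z))"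
  by (metis append_carrier_vec vec_first_carrier vec_last_carrier vec_first_last_append)

lemma ball_carrier_vec_1: "(\<forall>x\<in>carrier_vec 1. P x) \<longleftrightarrow> (\<forall>t. P (vec 1 (\<lambda>_. t)))"
proof -
  have "x = vec 1 (\<lambda>_. x $ 0)" if "x \<in> carrier_vec 1" for x :: "'a vec"
    using that by (intro eq_vecI) auto
  then show ?thesis by (metis vec_carrier)
qed

lemma vec_1_eq_zero_iff: "vec 1 (\<lambda>_. t) = 0\<^sub>v 1 \<longleftrightarrow> t = 0"
  by (auto simp: vec_eq_iff)

lemma append_eq_zero_vec_iff:
  "y \<in> carrier_vec a \<Longrightarrow>
   y @\<^sub>v z = 0\<^sub>v (a + b) \<longleftrightarrow> y = 0\<^sub>v a \<and> (z :: 'a :: zero vec) = 0\<^sub>v b"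
proof -
  have "0\<^sub>v (a + b) = (0\<^sub>v a @\<^sub>v 0\<^sub>v b :: 'a vec)"
    by (rule eq_vecI) auto
  then show "y \<in> carrier_vec a \<Longrightarrow> ?thesis" by (simp add: append_vec_eq)
qed

lemma scalar_prod_append_dim:
  "dim_vec w1 = dim_vec v1 \<Longrightarrow> dim_vec w2 = dim_vec v2 \<Longrightarrow>
   (v1 @\<^sub>v v2) \<bullet> (w1 @\<^sub>v w2) = v1 \<bullet> w1 + v2 \<bullet> (w2 :: 'a :: semiring_0 vec)"
  by (rule scalar_prod_append) (auto intro: carrier_vecI)

lemma scalar_prod_add_distrib_dim:
  "dim_vec v = dim_vec u \<Longrightarrow> dim_vec w = dim_vec u \<Longrightarrow>
   u \<bullet> (v + w) = u \<bullet> v + u \<bullet> (w :: 'a :: semiring_0 vec)"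
  by (rule scalar_prod_add_distrib) (auto intro: carrier_vecI)

lemma scalar_prod_mat_1_1 [simp]:
  "vec 1 (\<lambda>_. t :: real) \<bullet> (mat 1 1 (\<lambda>_. a) *\<^sub>v vec 1 (\<lambda>_. t)) = a * t\<^sup>2"
  by (simp add: scalar_prod_def power2_eq_square)

lemma scalar_prod_mat_of_cols_1 [simp]:
  "dim_vec y = m \<Longrightarrow> dim_vec b = m \<Longrightarrow>
   y \<bullet> (mat_of_cols m [b] *\<^sub>v vec 1 (\<lambda>_. t :: real)) = t * (b \<bullet> y)"
  by (auto simp: scalar_prod_def mat_of_cols_def row_def sum_distrib_left intro!: sum.cong)

lemma scalar_prod_row_mat [simp]:
  "dim_row r = 1 \<Longrightarrow> vec 1 (\<lambda>_. t) \<bullet> (r *\<^sub>v u) = t * (row r 0 \<bullet> u)"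
  by (simp add: scalar_prod_def)

lemma scalar_prod_transpose_row_mat [simp]:
  "dim_row r = 1 \<Longrightarrow> dim_vec u = dim_col r \<Longrightarrow>
   u \<bullet> (transpose_mat r *\<^sub>v vec 1 (\<lambda>_. t :: real)) = t * (row r 0 \<bullet> u)"
  by (auto simp: scalar_prod_def row_def sum_distrib_left intro!: sum.cong)

lemma scalar_prod_zero_mat [simp]: "dim_vec x = m \<Longrightarrow> y \<bullet> (0\<^sub>m n m *\<^sub>v x) = 0"
  by (simp add: scalar_prod_def)

lemma mult_mat_zero_vec: "A \<in> carrier_mat m n \<Longrightarrow> A *\<^sub>v 0\<^sub>v n = (0\<^sub>v m :: 'a :: semiring_0 vec)"
  by (rule eq_vecI) auto

definition diag_quad :: "(nat \<Rightarrow> real) \<Rightarrow> real vec \<Rightarrow> real" where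
  "diag_quad w x = (\<Sum>k<dim_vec x. w k * (x $ k)\<^sup>2)"

lemma dim_mat_diag [simp]: "dim_row (mat_diag m f) = m" "dim_col (mat_diag m f) = m"
  unfolding mat_diag_def by simp_all

lemma transpose_mat_diag [simp]: "transpose_mat (mat_diag m f) = mat_diag m f"
  unfolding mat_diag_def by (rule eq_matI) auto

lemma mat_diag_mult_vec:
  assumes "dim_vec x = m"
  shows "mat_diag m f *\<^sub>v x = vec m (\<lambda>k. f k * x $ k)"
proof (rule eq_vecI)
  fix i assume "i < dim_vec (vec m (\<lambda>k. f k * x $ k))"
  then have i: "i < m" by simp
  have "(mat_diag m f *\<^sub>v x) $ i = (\<Sum>j\<in>{0..<m}. (if i = j then f j else 0) * x $ j)"
    using i assms unfolding mat_diag_def by (simp add: scalar_prod_def)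
  also have "\<dots> = (\<Sum>j\<in>{0..<m}. if i = j then f j * x $ j else 0)"
    by (rule sum.cong) auto
  finally show "(mat_diag m f *\<^sub>v x) $ i = vec m (\<lambda>k. f k * x $ k) $ i"
    using i by simp
qed (simp add: mat_diag_def)

lemma scalar_prod_mat_diag: "dim_vec x = m \<Longrightarrow> x \<bullet> (mat_diag m w *\<^sub>v x) = diag_quad w x"
  by (auto simp: mat_diag_mult_vec scalar_prod_def diag_quad_def power2_eq_square lessThan_atLeast0
      intro!: sum.cong)

lemma minv_mat_diag:
  assumes "\<forall>k<m. f k \<noteq> 0"
  shows "minv (mat_diag m f) = mat_diag m (\<lambda>k. 1 / f k)"
proof -
  let ?D = "mat_diag m f" and ?E = "mat_diag m (\<lambda>k. 1 / f k)"
  have inv: "?D * ?E = 1\<^sub>m m" "?E * ?D = 1\<^sub>m m"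
    using assms unfolding mat_diag_diag by (auto simp: mat_diag_def intro!: eq_matI)
  then have "?D \<in> Units (ring_mat TYPE(real) m ())"
    unfolding Units_def ring_mat_simps using inv by (auto intro!: bexI[of _ ?E])
  then obtain B where B: "mat_inverse ?D = Some B"
    using mat_inverse(1)[OF mat_diag_dim, of m f "()"] by (cases "mat_inverse ?D") auto
  then have DB: "?D * B = 1\<^sub>m m" and B_carrier: "B \<in> carrier_mat m m"
    using mat_inverse(2)[OF mat_diag_dim] by auto
  have "B = (?E * ?D) * B" using inv(2) B_carrier by simp
  also have "\<dots> = ?E"
    using DB B_carrier by (subst assoc_mult_mat[of _ m m]) (auto simp: right_mult_one_mat[of _ m m])
  finally have "B = ?E" .
  then show ?thesis unfolding minv_def B by simp
qed

lemma index_congruence_mat_diag: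
  fixes P :: "real mat"
  assumes P: "P \<in> carrier_mat m n" and "i < n" "j < n"
  shows "(transpose_mat P * mat_diag m g * P) $$ (i, j) = (\<Sum>k<m. P $$ (k, i) * g k * P $$ (k, j))"
proof -
  have "transpose_mat P * mat_diag m g = mat n m (\<lambda>(i, k). P $$ (k, i) * g k)"
    using P by (subst mat_diag_mult_right[of _ n m]) auto
  then show ?thesis
    using assms by (simp add: scalar_prod_def lessThan_atLeast0)
qed

lemma transpose_congruence_mat_diag:
  "(P :: real mat) \<in> carrier_mat m n \<Longrightarrow>
   transpose_mat (transpose_mat P * mat_diag m g * P) = transpose_mat P * mat_diag m g * P"
  by (rule eq_matI) (auto simp del: index_mult_mat(1) simp: index_congruence_mat_diag ac_simps intro!: sum.cong)

lemma scalar_prod_congruence_mat_diag: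
  assumes P: "P \<in> carrier_mat m n" and u: "u \<in> carrier_vec n"
  shows "u \<bullet> ((transpose_mat P * mat_diag m g * P) *\<^sub>v u) = diag_quad g (P *\<^sub>v u)"
proof -
  have Pu: "P *\<^sub>v u \<in> carrier_vec m" using P u by simp
  have "(transpose_mat P * mat_diag m g * P) *\<^sub>v u = transpose_mat P *\<^sub>v (mat_diag m g *\<^sub>v (P *\<^sub>v u))"
    using P u by (simp add: assoc_mult_mat_vec[of _ n m _ n] assoc_mult_mat_vec[of _ n m _ m])
  moreover have Dw: "mat_diag m g *\<^sub>v (P *\<^sub>v u) \<in> carrier_vec m"
    using mat_diag_dim Pu by (rule mult_mat_vec_carrier)
  ultimately have "u \<bullet> ((transpose_mat P * mat_diag m g * P) *\<^sub>v u)
      = (transpose_mat P *\<^sub>v (mat_diag m g *\<^sub>v (P *\<^sub>v u))) \<bullet> u"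
    using u P by (simp add: comm_scalar_prod[OF u])
  also have "\<dots> = (mat_diag m g *\<^sub>v (P *\<^sub>v u)) \<bullet> (P *\<^sub>v u)"
    by (rule transpose_vec_mult_scalar[OF P u Dw])
  also have "\<dots> = diag_quad g (P *\<^sub>v u)"
    using P by (simp add: comm_scalar_prod[OF Dw Pu] scalar_prod_mat_diag)
  finally show ?thesis .
qed

lemma Lcal_mat_diag:
  assumes P: "P \<in> carrier_mat m n" and D: "minv D = mat_diag m s"
  shows "Lcal P (mat_diag m h) P D = transpose_mat P * mat_diag m (\<lambda>k. 2 * s k - (s k)\<^sup>2 * h k) * P"
proof -
  let ?S = "mat_diag m s"
  have PT: "transpose_mat P \<in> carrier_mat n m" using P by simp
  have "transpose_mat P * ?S * mat_diag m h * ?S = transpose_mat P * mat_diag m (\<lambda>k. s k * h k * s k)"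
    using PT by (simp add: assoc_mult_mat[of _ n m _ m _ m])
  then have L: "Lcal P (mat_diag m h) P D = transpose_mat P * ?S * P + transpose_mat P * ?S * P
      - transpose_mat P * mat_diag m (\<lambda>k. s k * h k * s k) * P"
    unfolding Lcal_def D by simp
  show ?thesis
  proof (rule eq_matI)
    fix i j assume "i < dim_row (transpose_mat P * mat_diag m (\<lambda>k. 2 * s k - (s k)\<^sup>2 * h k) * P)"
      and "j < dim_col (transpose_mat P * mat_diag m (\<lambda>k. 2 * s k - (s k)\<^sup>2 * h k) * P)"
    then have ij: "i < n" "j < n" using P by auto
    show "Lcal P (mat_diag m h) P D $$ (i, j)
        = (transpose_mat P * mat_diag m (\<lambda>k. 2 * s k - (s k)\<^sup>2 * h k) * P) $$ (i, j)"
      unfolding L using P ij carrier_matD[OF P]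
      by (simp del: index_mult_mat(1) add: index_congruence_mat_diag sum_subtractf[symmetric] sum.distrib[symmetric]
          power2_eq_square algebra_simps)
  qed (use P L in auto)
qed

lemma diag_quad_nonneg: "\<forall>k<dim_vec x. 0 \<le> w k \<Longrightarrow> 0 \<le> diag_quad w x"
  unfolding diag_quad_def by (intro sum_nonneg) auto

lemma diag_quad_pos:
  assumes w: "\<forall>k<dim_vec x. 0 < w k" and x: "x \<noteq> 0\<^sub>v (dim_vec x)"
  shows "0 < diag_quad w x"
proof -
  obtain k where k: "k < dim_vec x" "x $ k \<noteq> 0"
    using x by (auto simp: vec_eq_iff)
  show ?thesis
    unfolding diag_quad_def by (rule sum_pos2[of _ k]) (use k w in \<open>auto intro: mult_nonneg_nonneg\<close>)
qed

lemma diag_quad_mono: "\<forall>k<dim_vec x. w k \<le> w' k \<Longrightarrow> diag_quad w x \<le> diag_quad w' x"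
  unfolding diag_quad_def by (intro sum_mono mult_right_mono) auto

lemma diag_quad_complete_square:
  assumes h: "\<forall>k<dim_vec y. h k \<noteq> 0" and b: "dim_vec b = dim_vec y"
  shows "diag_quad h y + 2 * t * (b \<bullet> y)
    = diag_quad h (vec (dim_vec y) (\<lambda>k. y $ k + t * b $ k / h k)) - t\<^sup>2 * diag_quad (\<lambda>k. 1 / h k) b"
proof -
  have "diag_quad h y + 2 * t * (b \<bullet> y) = (\<Sum>k<dim_vec y. h k * (y $ k)\<^sup>2 + 2 * t * (b $ k * y $ k))"
    using b by (simp add: diag_quad_def scalar_prod_def lessThan_atLeast0 sum.distrib sum_distrib_left)
  also have "\<dots> = (\<Sum>k<dim_vec y. h k * (y $ k + t * b $ k / h k)\<^sup>2 - t\<^sup>2 * (1 / h k * (b $ k)\<^sup>2))"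
    by (rule sum.cong) (use h in \<open>auto simp: field_simps power2_eq_square\<close>)
  also have "\<dots> = diag_quad h (vec (dim_vec y) (\<lambda>k. y $ k + t * b $ k / h k))
      - t\<^sup>2 * diag_quad (\<lambda>k. 1 / h k) b"
    using b by (simp add: diag_quad_def sum_subtractf sum_distrib_left)
  finally show ?thesis .
qed

lemma Lcal_weight_le: "0 < h \<Longrightarrow> 2 * s - s\<^sup>2 * h \<le> 1 / (h :: real)"
proof -
  assume "0 < h"
  then have "1 / h - (2 * s - s\<^sup>2 * h) = (1 - s * h)\<^sup>2 / h"
    by (simp add: field_simps power2_eq_square)
  also have "\<dots> \<ge> 0" using \<open>0 < h\<close> by simp
  finally show ?thesis by simp
qed

definition cond3_form :: "real \<Rightarrow> real vec \<Rightarrow> real mat \<Rightarrow> real mat \<Rightarrow> (nat \<Rightarrow> real) \<Rightarrow> (nat \<Rightarrow> real) \<Rightarrow>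
    real \<Rightarrow> real vec \<Rightarrow> real vec \<Rightarrow> real" where
  "cond3_form a \<rho> Pl Pb w w' t u v =
     a * t\<^sup>2 + 2 * t * (\<rho> \<bullet> u) + 2 * t * (\<rho> \<bullet> v) + diag_quad w (Pl *\<^sub>v u) + diag_quad w' (Pb *\<^sub>v v)"

lemma cond3_mat_diag_iff:
  assumes Pl: "Pl \<in> carrier_mat ml n" and Pb: "Pb \<in> carrier_mat mb n" and r: "r \<in> carrier_mat 1 n"
    and bl: "bl \<in> carrier_vec ml" and bb: "bb \<in> carrier_vec mb"
  shows "cond3 c r Pl Pb bl bb (mat_diag ml s) (mat_diag mb s') \<longleftrightarrow>
    (\<forall>t. \<forall>u\<in>carrier_vec n. \<forall>v\<in>carrier_vec n. (t \<noteq> 0 \<or> u \<noteq> 0\<^sub>v n \<or> v \<noteq> 0\<^sub>v n) \<longrightarrow>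
       0 < cond3_form (2 * c - diag_quad s bl - diag_quad s' bb) (row r 0) Pl Pb s s' t u v)"
proof -
  let ?X = "transpose_mat Pl * mat_diag ml s * Pl" and ?Y = "transpose_mat Pb * mat_diag mb s' * Pb"
  let ?a = "2 * c - bl \<bullet> (mat_diag ml s *\<^sub>v bl) - bb \<bullet> (mat_diag mb s' *\<^sub>v bb)"
  let ?M = "vcat (hcat (mat 1 1 (\<lambda>_. ?a)) (hcat r r))
        (vcat (hcat (transpose_mat r) (hcat ?X (0\<^sub>m n n))) (hcat (transpose_mat r) (hcat (0\<^sub>m n n) ?Y)))"
  have dims: "dim_row Pl = ml" "dim_col Pl = n" "dim_row Pb = mb" "dim_col Pb = n"
    "dim_row r = 1" "dim_col r = n" "dim_vec bl = ml" "dim_vec bb = mb"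
    using assms by auto
  have M: "?M \<in> carrier_mat (1 + (n + n)) (1 + (n + n))"
    using dims by (intro carrier_matI) auto
  have sym: "transpose_mat ?M = ?M"
    using dims by (simp add: transpose_hcat transpose_vcat hcat_vcat_interchange
        transpose_congruence_mat_diag[OF Pl] transpose_congruence_mat_diag[OF Pb])
  have quad: "(vec 1 (\<lambda>_. t) @\<^sub>v (u @\<^sub>v v)) \<bullet> (?M *\<^sub>v (vec 1 (\<lambda>_. t) @\<^sub>v (u @\<^sub>v v)))
      = cond3_form (2 * c - diag_quad s bl - diag_quad s' bb) (row r 0) Pl Pb s s' t u v"
    if "u \<in> carrier_vec n" "v \<in> carrier_vec n" for t u v
    \<comment> \<open>without \<open>One_nat_def\<close>, so that the block size \<open>1\<close> is not rewritten to \<open>Suc 0\<close>\<close>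
    using that dims
    by (simp del: One_nat_def add: mult_mat_vec_vcat mult_mat_vec_hcat scalar_prod_append_dim
        scalar_prod_add_distrib_dim scalar_prod_mat_diag scalar_prod_congruence_mat_diag[OF Pl]
        scalar_prod_congruence_mat_diag[OF Pb] cond3_form_def algebra_simps)
  have "cond3 c r Pl Pb bl bb (mat_diag ml s) (mat_diag mb s') \<longleftrightarrow>
      (\<forall>x\<in>carrier_vec (1 + (n + n)). x \<noteq> 0\<^sub>v (1 + (n + n)) \<longrightarrow> 0 < x \<bullet> (?M *\<^sub>v x))"
    unfolding cond3_def Let_def posdef_def dims using M sym by auto
  then show ?thesis
    unfolding ball_carrier_vec_add ball_carrier_vec_1
    by (simp del: One_nat_def add: append_eq_zero_vec_iff vec_1_eq_zero_iff quad)
qed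

lemma lmi5_mat_diag_iff:
  assumes Pl: "Pl \<in> carrier_mat ml n" and Pb: "Pb \<in> carrier_mat mb n" and r: "r \<in> carrier_mat 1 n"
    and bl: "bl \<in> carrier_vec ml" and bb: "bb \<in> carrier_vec mb"
    and s: "\<forall>k<ml. s k \<noteq> 0" and s': "\<forall>k<mb. s' k \<noteq> 0"
  shows "lmi5 c r Pl Pb (mat_diag ml s) (mat_diag mb s') bl bb (mat_diag ml h) (mat_diag mb h') \<longleftrightarrow>
    (\<forall>y\<in>carrier_vec ml. \<forall>z\<in>carrier_vec mb. \<forall>t. \<forall>u\<in>carrier_vec n. \<forall>v\<in>carrier_vec n.
       (y \<noteq> 0\<^sub>v ml \<or> z \<noteq> 0\<^sub>v mb \<or> t \<noteq> 0 \<or> u \<noteq> 0\<^sub>v n \<or> v \<noteq> 0\<^sub>v n) \<longrightarrow>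
       0 < diag_quad h y + 2 * t * (bl \<bullet> y) + diag_quad h' z + 2 * t * (bb \<bullet> z)
         + cond3_form (2 * c) (row r 0) Pl Pb
             (\<lambda>k. 2 * s k - (s k)\<^sup>2 * h k) (\<lambda>k. 2 * s' k - (s' k)\<^sup>2 * h' k) t u v)"
proof -
  let ?g = "\<lambda>k. 2 * s k - (s k)\<^sup>2 * h k" and ?g' = "\<lambda>k. 2 * s' k - (s' k)\<^sup>2 * h' k"
  let ?X = "transpose_mat Pl * mat_diag ml ?g * Pl" and ?Y = "transpose_mat Pb * mat_diag mb ?g' * Pb"
  have L: "Lcal Pl (mat_diag ml h) Pl (minv (mat_diag ml s)) = ?X"
    "Lcal Pb (mat_diag mb h') Pb (minv (mat_diag mb s')) = ?Y"
    using s s' by (auto intro!: Lcal_mat_diag Pl Pb simp: minv_mat_diag)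
  let ?M = "vcat (hcat (mat_diag ml h) (hcat (0\<^sub>m ml mb) (hcat (mat_of_cols ml [bl]) (hcat (0\<^sub>m ml n) (0\<^sub>m ml n)))))
      (vcat (hcat (0\<^sub>m mb ml) (hcat (mat_diag mb h') (hcat (mat_of_cols mb [bb]) (hcat (0\<^sub>m mb n) (0\<^sub>m mb n)))))
      (vcat (hcat (mat_of_rows ml [bl]) (hcat (mat_of_rows mb [bb]) (hcat (mat 1 1 (\<lambda>_. 2 * c)) (hcat r r))))
      (vcat (hcat (0\<^sub>m n ml) (hcat (0\<^sub>m n mb) (hcat (transpose_mat r) (hcat ?X (0\<^sub>m n n)))))
            (hcat (0\<^sub>m n ml) (hcat (0\<^sub>m n mb) (hcat (transpose_mat r) (hcat (0\<^sub>m n n) ?Y)))))))"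
  let ?N = "ml + (mb + (1 + (n + n)))"
  have dims: "dim_row Pl = ml" "dim_col Pl = n" "dim_row Pb = mb" "dim_col Pb = n"
    "dim_row r = 1" "dim_col r = n" "dim_vec bl = ml" "dim_vec bb = mb"
    using assms by auto
  have M: "?M \<in> carrier_mat ?N ?N"
    using dims by (intro carrier_matI) auto
  have sym: "transpose_mat ?M = ?M"
    using dims by (simp add: transpose_hcat transpose_vcat hcat_vcat_interchange transpose_mat_of_cols
        transpose_mat_of_rows transpose_congruence_mat_diag[OF Pl] transpose_congruence_mat_diag[OF Pb])
  have quad: "(y @\<^sub>v (z @\<^sub>v (vec 1 (\<lambda>_. t) @\<^sub>v (u @\<^sub>v v))))
      \<bullet> (?M *\<^sub>v (y @\<^sub>v (z @\<^sub>v (vec 1 (\<lambda>_. t) @\<^sub>v (u @\<^sub>v v)))))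
      = diag_quad h y + 2 * t * (bl \<bullet> y) + diag_quad h' z + 2 * t * (bb \<bullet> z)
         + cond3_form (2 * c) (row r 0) Pl Pb ?g ?g' t u v"
    if "y \<in> carrier_vec ml" "z \<in> carrier_vec mb" "u \<in> carrier_vec n" "v \<in> carrier_vec n" for y z t u v
    using that dims bl bb
    by (simp del: One_nat_def add: mult_mat_vec_vcat mult_mat_vec_hcat scalar_prod_append_dim
        scalar_prod_add_distrib_dim scalar_prod_mat_diag scalar_prod_congruence_mat_diag[OF Pl]
        scalar_prod_congruence_mat_diag[OF Pb] cond3_form_def algebra_simps)
  have "lmi5 c r Pl Pb (mat_diag ml s) (mat_diag mb s') bl bb (mat_diag ml h) (mat_diag mb h') \<longleftrightarrow>
      (\<forall>x\<in>carrier_vec ?N. x \<noteq> 0\<^sub>v ?N \<longrightarrow> 0 < x \<bullet> (?M *\<^sub>v x))"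
    unfolding lmi5_def Let_def posdef_def dims L using M sym by auto
  then show ?thesis
    unfolding ball_carrier_vec_add ball_carrier_vec_1
    by (simp del: One_nat_def add: append_eq_zero_vec_iff vec_1_eq_zero_iff quad)
qed

lemma lmi5_of_cond3_mat_diag:
  assumes Pl: "Pl \<in> carrier_mat ml n" and Pb: "Pb \<in> carrier_mat mb n" and r: "r \<in> carrier_mat 1 n"
    and bl: "bl \<in> carrier_vec ml" and bb: "bb \<in> carrier_vec mb"
    and s: "\<forall>k<ml. 0 < s k" and s': "\<forall>k<mb. 0 < s' k"
    and cond: "cond3 c r Pl Pb bl bb (mat_diag ml s) (mat_diag mb s')"
  shows "lmi5 c r Pl Pb (mat_diag ml s) (mat_diag mb s') bl bb
    (mat_diag ml (\<lambda>k. 1 / s k)) (mat_diag mb (\<lambda>k. 1 / s' k))"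
proof -
  let ?Q3 = "cond3_form (2 * c - diag_quad s bl - diag_quad s' bb) (row r 0) Pl Pb s s'"
  have Q3_pos: "0 < ?Q3 t u v"
    if "u \<in> carrier_vec n" "v \<in> carrier_vec n" "t \<noteq> 0 \<or> u \<noteq> 0\<^sub>v n \<or> v \<noteq> 0\<^sub>v n" for t u v
    using cond that unfolding cond3_mat_diag_iff[OF Pl Pb r bl bb] by blast
  \<comment> \<open>also where \<open>f k = 0\<close>, because \<open>1 / 0 = 0\<close>\<close>
  have weight: "(\<lambda>k. 2 * f k - (f k)\<^sup>2 * (1 / f k)) = f" for f :: "nat \<Rightarrow> real"
  proof
    fix k show "2 * f k - (f k)\<^sup>2 * (1 / f k) = f k"
      by (cases "f k = 0") (simp_all add: power2_eq_square)
  qed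
  have pos: "0 < diag_quad (\<lambda>k. 1 / s k) y + 2 * t * (bl \<bullet> y) + diag_quad (\<lambda>k. 1 / s' k) z + 2 * t * (bb \<bullet> z)
      + cond3_form (2 * c) (row r 0) Pl Pb s s' t u v"
    if y: "y \<in> carrier_vec ml" and z: "z \<in> carrier_vec mb" and u: "u \<in> carrier_vec n" and v: "v \<in> carrier_vec n"
      and nz: "y \<noteq> 0\<^sub>v ml \<or> z \<noteq> 0\<^sub>v mb \<or> t \<noteq> 0 \<or> u \<noteq> 0\<^sub>v n \<or> v \<noteq> 0\<^sub>v n" for y z t u v
  proof -
    define y' where "y' = vec ml (\<lambda>k. y $ k + t * bl $ k / (1 / s k))"
    define z' where "z' = vec mb (\<lambda>k. z $ k + t * bb $ k / (1 / s' k))"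
    have "diag_quad (\<lambda>k. 1 / s k) y + 2 * t * (bl \<bullet> y) + diag_quad (\<lambda>k. 1 / s' k) z + 2 * t * (bb \<bullet> z)
        + cond3_form (2 * c) (row r 0) Pl Pb s s' t u v
      = ?Q3 t u v + diag_quad (\<lambda>k. 1 / s k) y' + diag_quad (\<lambda>k. 1 / s' k) z'"
      using diag_quad_complete_square[of y "\<lambda>k. 1 / s k" bl t]
        diag_quad_complete_square[of z "\<lambda>k. 1 / s' k" bb t]
        s s' y z bl bb
      unfolding y'_def z'_def cond3_form_def by (simp add: algebra_simps less_imp_neq[symmetric])
    moreover have nonneg: "0 \<le> diag_quad (\<lambda>k. 1 / s k) y'" "0 \<le> diag_quad (\<lambda>k. 1 / s' k) z'"
      using s s' unfolding y'_def z'_def by (auto intro!: diag_quad_nonneg simp: less_imp_le)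
    moreover have "0 < ?Q3 t u v + diag_quad (\<lambda>k. 1 / s k) y' + diag_quad (\<lambda>k. 1 / s' k) z'"
    proof (cases "t \<noteq> 0 \<or> u \<noteq> 0\<^sub>v n \<or> v \<noteq> 0\<^sub>v n")
      case True
      then show ?thesis using Q3_pos[OF u v True] nonneg by linarith
    next
      case False
      then have "y' = y" "z' = z" "?Q3 t u v = 0"
        using y z Pl Pb unfolding y'_def z'_def cond3_form_def diag_quad_def
        by (auto simp: mult_mat_zero_vec)
      moreover have "y \<noteq> 0\<^sub>v ml \<or> z \<noteq> 0\<^sub>v mb" using nz False by auto
      then have "0 < diag_quad (\<lambda>k. 1 / s k) y \<or> 0 < diag_quad (\<lambda>k. 1 / s' k) z"
        using s s' y z by (auto intro!: diag_quad_pos)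
      ultimately show ?thesis using nonneg by auto
    qed
    ultimately show ?thesis by simp
  qed
  have s_ne: "\<forall>k<ml. s k \<noteq> 0" "\<forall>k<mb. s' k \<noteq> 0" using s s' by auto
  show ?thesis
    unfolding lmi5_mat_diag_iff[OF Pl Pb r bl bb s_ne] weight using pos by simp
qed

lemma cond3_of_lmi5_mat_diag:
  assumes Pl: "Pl \<in> carrier_mat ml n" and Pb: "Pb \<in> carrier_mat mb n" and r: "r \<in> carrier_mat 1 n"
    and bl: "bl \<in> carrier_vec ml" and bb: "bb \<in> carrier_vec mb"
    and s: "\<forall>k<ml. s k \<noteq> 0" and s': "\<forall>k<mb. s' k \<noteq> 0"
    and h: "\<forall>k<ml. 0 < h k" and h': "\<forall>k<mb. 0 < h' k"
    and lmi: "lmi5 c r Pl Pb (mat_diag ml s) (mat_diag mb s') bl bb (mat_diag ml h) (mat_diag mb h')"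
  shows "cond3 c r Pl Pb bl bb (mat_diag ml (\<lambda>k. 1 / h k)) (mat_diag mb (\<lambda>k. 1 / h' k))"
  unfolding cond3_mat_diag_iff[OF Pl Pb r bl bb]
proof (intro allI ballI impI)
  fix t :: real and u v :: "real vec" assume u: "u \<in> carrier_vec n" and v: "v \<in> carrier_vec n"
    and nz: "t \<noteq> 0 \<or> u \<noteq> 0\<^sub>v n \<or> v \<noteq> 0\<^sub>v n"
  let ?g = "\<lambda>k. 2 * s k - (s k)\<^sup>2 * h k" and ?g' = "\<lambda>k. 2 * s' k - (s' k)\<^sup>2 * h' k"
  let ?A = "diag_quad (\<lambda>k. 1 / h k) bl" and ?B = "diag_quad (\<lambda>k. 1 / h' k) bb"
  \<comment> \<open>the minimisers of the completed squares\<close>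
  define y where "y = vec ml (\<lambda>k. - t * bl $ k / h k)"
  define z where "z = vec mb (\<lambda>k. - t * bb $ k / h' k)"
  have y: "y \<in> carrier_vec ml" and z: "z \<in> carrier_vec mb" unfolding y_def z_def by auto
  have h_ne: "\<forall>k<ml. h k \<noteq> 0" "\<forall>k<mb. h' k \<noteq> 0" using h h' by auto
  have "0 < diag_quad h y + 2 * t * (bl \<bullet> y) + diag_quad h' z + 2 * t * (bb \<bullet> z)
      + cond3_form (2 * c) (row r 0) Pl Pb ?g ?g' t u v"
    using lmi y z u v nz unfolding lmi5_mat_diag_iff[OF Pl Pb r bl bb s s'] by blast
  moreover have "diag_quad h y + 2 * t * (bl \<bullet> y) = - t\<^sup>2 * ?A"
    using diag_quad_complete_square[of y h bl t] h_ne bl unfolding y_def by (simp add: diag_quad_def)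
  moreover have "diag_quad h' z + 2 * t * (bb \<bullet> z) = - t\<^sup>2 * ?B"
    using diag_quad_complete_square[of z h' bb t] h_ne bb unfolding z_def by (simp add: diag_quad_def)
  moreover have "cond3_form (2 * c) (row r 0) Pl Pb ?g ?g' t u v
      \<le> cond3_form (2 * c) (row r 0) Pl Pb (\<lambda>k. 1 / h k) (\<lambda>k. 1 / h' k) t u v"
    using Pl Pb h h' unfolding cond3_form_def
    by (intro add_mono order_refl diag_quad_mono) (auto intro: Lcal_weight_le)
  moreover have "cond3_form (2 * c - ?A - ?B) (row r 0) Pl Pb (\<lambda>k. 1 / h k) (\<lambda>k. 1 / h' k) t u v
      = cond3_form (2 * c) (row r 0) Pl Pb (\<lambda>k. 1 / h k) (\<lambda>k. 1 / h' k) t u v - t\<^sup>2 * ?A - t\<^sup>2 * ?B"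
    unfolding cond3_form_def by (simp add: algebra_simps)
  ultimately show "0 < cond3_form (2 * c - ?A - ?B) (row r 0) Pl Pb (\<lambda>k. 1 / h k) (\<lambda>k. 1 / h' k) t u v"
    by linarith
qed

lemma DplusE:
  assumes "Dplus m D"
  obtains d where "D = mat_diag m d" "\<forall>k<m. 0 < d k"
proof
  show "D = mat_diag m (\<lambda>k. D $$ (k, k))"
    using assms unfolding Dplus_def diagonal_mat_def mat_diag_def by (intro eq_matI) auto
qed (use assms in \<open>auto simp: Dplus_def\<close>)

lemma lmi5_of_cond3:
  assumes Pl: "Pl \<in> carrier_mat ml n" and Pb: "Pb \<in> carrier_mat mb n" and r: "r \<in> carrier_mat 1 n"
    and bl: "bl \<in> carrier_vec ml" and bb: "bb \<in> carrier_vec mb"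
    and Sl: "Dplus ml Sl" and Sb: "Dplus mb Sb" and cond: "cond3 c r Pl Pb bl bb Sl Sb"
  shows "lmi5 c r Pl Pb Sl Sb bl bb (minv Sl) (minv Sb)"
proof -
  obtain s where s: "Sl = mat_diag ml s" "\<forall>k<ml. 0 < s k" using Sl by (rule DplusE)
  obtain s' where s': "Sb = mat_diag mb s'" "\<forall>k<mb. 0 < s' k" using Sb by (rule DplusE)
  have "minv Sl = mat_diag ml (\<lambda>k. 1 / s k)" "minv Sb = mat_diag mb (\<lambda>k. 1 / s' k)"
    using s s' by (auto intro!: minv_mat_diag)
  then show ?thesis
    using lmi5_of_cond3_mat_diag[OF Pl Pb r bl bb s(2) s'(2)] cond s s' by simp
qed

lemma cond3_of_lmi5:
  assumes Pl: "Pl \<in> carrier_mat ml n" and Pb: "Pb \<in> carrier_mat mb n" and r: "r \<in> carrier_mat 1 n"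
    and bl: "bl \<in> carrier_vec ml" and bb: "bb \<in> carrier_vec mb"
    and Sl: "Dplus ml Sl" and Sb: "Dplus mb Sb" and Sh: "Dplus ml Sh" and Sbh: "Dplus mb Sbh"
    and lmi: "lmi5 c r Pl Pb Sl Sb bl bb Sh Sbh"
  shows "cond3 c r Pl Pb bl bb (minv Sh) (minv Sbh)"
proof -
  obtain s where s: "Sl = mat_diag ml s" "\<forall>k<ml. 0 < s k" using Sl by (rule DplusE)
  obtain s' where s': "Sb = mat_diag mb s'" "\<forall>k<mb. 0 < s' k" using Sb by (rule DplusE)
  obtain h where h: "Sh = mat_diag ml h" "\<forall>k<ml. 0 < h k" using Sh by (rule DplusE)
  obtain h' where h': "Sbh = mat_diag mb h'" "\<forall>k<mb. 0 < h' k" using Sbh by (rule DplusE)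
  have "minv Sh = mat_diag ml (\<lambda>k. 1 / h k)" "minv Sbh = mat_diag mb (\<lambda>k. 1 / h' k)"
    using h h' by (auto intro!: minv_mat_diag)
  moreover have "\<forall>k<ml. s k \<noteq> 0" "\<forall>k<mb. s' k \<noteq> 0" using s s' by auto
  ultimately show ?thesis
    using cond3_of_lmi5_mat_diag[OF Pl Pb r bl bb _ _ h(2) h'(2)] lmi s s' h h' by simp
qed

theorem theorem3:
  fixes nx nu ml mb mx mu :: nat
    and Pl Pb Vx Vu :: "real mat" and vx vu :: "real vec"
  assumes "Pl \<in> carrier_mat ml nx" and "Pb \<in> carrier_mat mb nx"
    and "Vx \<in> carrier_mat mx nx" and "vx \<in> carrier_vec mx"
    and "Vu \<in> carrier_mat mu nu" and "vu \<in> carrier_vec mu"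
  shows
   "(\<forall>i<mx. \<forall>bl bb Sl Sb.
       bl \<in> carrier_vec ml \<and> bb \<in> carrier_vec mb \<and> Dplus ml Sl \<and> Dplus mb Sb \<and>
       condX Pl Pb Vx vx i bl bb Sl Sb \<longrightarrow>
         lmiX Pl Pb Vx vx i Sl Sb bl bb (minv Sl) (minv Sb) \<and>
         (\<forall>bl' bb' Sh Sbh.
            bl' \<in> carrier_vec ml \<and> bb' \<in> carrier_vec mb \<and> Dplus ml Sh \<and> Dplus mb Sbh \<and>
            lmiX Pl Pb Vx vx i Sl Sb bl' bb' Sh Sbh \<longrightarrow>
              condX Pl Pb Vx vx i bl' bb' (minv Sh) (minv Sbh)))
    \<and>
    (\<forall>i<mu. \<forall>K bl bb Rl Rb.
       K \<in> carrier_mat nu nx \<and>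
       bl \<in> carrier_vec ml \<and> bb \<in> carrier_vec mb \<and> Dplus ml Rl \<and> Dplus mb Rb \<and>
       condU Pl Pb Vu vu i K bl bb Rl Rb \<longrightarrow>
         lmiU Pl Pb Vu vu i Rl Rb K bl bb (minv Rl) (minv Rb) \<and>
         (\<forall>K' bl' bb' Rh Rbh.
            K' \<in> carrier_mat nu nx \<and>
            bl' \<in> carrier_vec ml \<and> bb' \<in> carrier_vec mb \<and> Dplus ml Rh \<and> Dplus mb Rbh \<and>
            lmiU Pl Pb Vu vu i Rl Rb K' bl' bb' Rh Rbh \<longrightarrow>
              condU Pl Pb Vu vu i K' bl' bb' (minv Rh) (minv Rbh)))"
proof -
  have Pl: "Pl \<in> carrier_mat ml nx" and Pb: "Pb \<in> carrier_mat mb nx" using assms by auto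
  have rX: "mat_of_rows (dim_col Vx) [row Vx i] \<in> carrier_mat 1 nx" if "i < mx" for i
    using assms(3) that by auto
  have rU: "mat_of_rows (dim_col Vu) [row Vu i] * K \<in> carrier_mat 1 nx" if "K \<in> carrier_mat nu nx" for i K
    using assms(5) that by auto
  show ?thesis
    unfolding condX_def lmiX_def condU_def lmiU_def
    using lmi5_of_cond3[OF Pl Pb rX] cond3_of_lmi5[OF Pl Pb rX]
      lmi5_of_cond3[OF Pl Pb rU] cond3_of_lmi5[OF Pl Pb rU]
    by blast
qed

end
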